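(* Let $a,b,c\in\mathbb{R}$, $1\le p<\infty$, $0<q,r<\infty$. (i) If $\frac{a+N}{q}\ne\frac{b-p+N}{p}$ and $W^{1,(q,p)}_{\{a,b\}}(\mathbb{R}^N_* )$ is continuously embedded into $L^r(\mathbb{R}^N;|x|^cdx)$, then $\theta_c\in[0,1]$ and $\theta_c\left(\frac1p-\frac1N-\frac1q\right)\le\frac1r-\frac1q$. In particular $r\le\max\{p^*,q\}$. (ii) If $\frac{a+N}{q}=\frac{b-p+N}{p}$, $c=c^0$, and $W^{1,(q,p)}_{\{a,b\}}(\mathbb{R}^N_* )$ is continuously embedded into $L^r(\mathbb{R}^N;|x|^cdx)$, then $r\le\max\{p^*,q\}$.
   Context: $N\ge1$, $\mathbb{R}^N_*:=\mathbb{R}^N\setminus\{0\}$. For $d\in\mathbb{R}$, $0<s<\infty$, $\|u\|_{d,s}:=(\int_{\mathbb{R}^N}|x|^d|u|^s dx)^{1/s}$ ($\{0\}$ of measure $0$; Euclidean norm for vector-valued $u$), $L^s(\mathbb{R}^N;|x|^ddx)$ the measurable $u$ with $\|u\|_{d,s}<\infty$. $W^{1,(q,p)}_{\{a,b\}}(\mathbb{R}^N_* )$: $u\in L^1_{loc}(\mathbb{R}^N_* )$ with $\|u\|_{a,q},\|\nabla u\|_{b,p}<\infty$ (distributional gradient on $\mathbb{R}^N_*$), (quasi-)norm $\|u\|_{a,q}+\|\nabla u\|_{b,p}$. $p^*:=\infty$ if $p\ge N$, $p^*:=Np/(N-p)$ if $p<N$. $c^0:=\frac{r(a+N)}{q}-N$,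 $c^1:=\frac{r(b-p+N)}{p}-N$, $\theta_c:=\frac{c-c^0}{c^1-c^0}$ when $c^0\neq c^1$. *)

theory Defs
  imports "HOL-Analysis.Analysis"
begin

definition pd :: "'a::euclidean_space \<Rightarrow> ('a \<Rightarrow> real) \<Rightarrow> 'a \<Rightarrow> real" where
  "pd i f x = frechet_derivative f (at x) i"

fun iter_pd :: "'a::euclidean_space list \<Rightarrow> ('a \<Rightarrow> real) \<Rightarrow> 'a \<Rightarrow> real" where
  "iter_pd [] f = f"
| "iter_pd (i # is) f = pd i (iter_pd is f)"

definition smooth_fun :: "('a::euclidean_space \<Rightarrow> real) \<Rightarrow> bool" where
  "smooth_fun f \<longleftrightarrow> (\<forall>is. set is \<subseteq> Basis \<longrightarrow> (\<forall>x. iter_pd is f differentiable (at x)))"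

definition test_fun_punct :: "('a::euclidean_space \<Rightarrow> real) \<Rightarrow> bool" where
  "test_fun_punct \<phi> \<longleftrightarrow> smooth_fun \<phi> \<and> compact (closure {x. \<phi> x \<noteq> 0})
      \<and> 0 \<notin> closure {x. \<phi> x \<noteq> 0}"

definition loc_int_punct :: "('a::euclidean_space \<Rightarrow> 'b::{banach,second_countable_topology}) \<Rightarrow> bool" where
  "loc_int_punct u \<longleftrightarrow> (\<forall>K. compact K \<and> 0 \<notin> K \<longrightarrow> set_integrable lebesgue K u)"

definition weak_grad_punct :: "('a::euclidean_space \<Rightarrow> real) \<Rightarrow> ('a \<Rightarrow> 'a) \<Rightarrow> bool" where
  "weak_grad_punct u g \<longleftrightarrow> loc_int_punct u \<and> loc_int_punct g \<and>
     (\<forall>\<phi>. test_fun_punct \<phi> \<longrightarrow> (\<forall>i\<in>Basis.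
        (\<integral>x. u x * pd i \<phi> x \<partial>lebesgue) = - (\<integral>x. (g x \<bullet> i) * \<phi> x \<partial>lebesgue)))"

definition wint :: "real \<Rightarrow> real \<Rightarrow> ('a::euclidean_space \<Rightarrow> 'b::real_normed_vector) \<Rightarrow> ennreal" where
  "wint d s u = (\<integral>\<^sup>+x. ennreal (norm x powr d * norm (u x) powr s) \<partial>lebesgue)"

definition in_wL :: "real \<Rightarrow> real \<Rightarrow> ('a::euclidean_space \<Rightarrow> 'b::{real_normed_vector,second_countable_topology}) \<Rightarrow> bool" where
  "in_wL d s u \<longleftrightarrow> u \<in> borel_measurable lebesgue \<and> wint d s u < \<infinity>"

definition wnorm :: "real \<Rightarrow> real \<Rightarrow> ('a::euclidean_space \<Rightarrow> 'b::real_normed_vector) \<Rightarrow> real" where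
  "wnorm d s u = enn2real (wint d s u) powr (1 / s)"

text \<open>Continuous embedding of W^{1,(q,p)}_{a,b}(R^N_*) into L^r(R^N;|x|^c dx).\<close>
definition W_embeds :: "'a::euclidean_space itself \<Rightarrow> real \<Rightarrow> real \<Rightarrow> real \<Rightarrow> real \<Rightarrow> real \<Rightarrow> real \<Rightarrow> bool" where
  "W_embeds _ a b q p c r \<longleftrightarrow> (\<exists>C. \<forall>(u::'a \<Rightarrow> real) g. weak_grad_punct u g \<and> in_wL a q u \<and> in_wL b p g
      \<longrightarrow> in_wL c r u \<and> wnorm c r u \<le> C * (wnorm a q u + wnorm b p g))"

definition sob_exp :: "real \<Rightarrow> nat \<Rightarrow> ereal" where
  "sob_exp p N = (if p \<ge> real N then \<infinity> else ereal (real N * p / (real N - p)))"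

definition c0 :: "nat \<Rightarrow> real \<Rightarrow> real \<Rightarrow> real \<Rightarrow> real" where
  "c0 N a q r = r * (a + real N) / q - real N"

definition c1 :: "nat \<Rightarrow> real \<Rightarrow> real \<Rightarrow> real \<Rightarrow> real" where
  "c1 N b p r = r * (b - p + real N) / p - real N"

definition theta :: "nat \<Rightarrow> real \<Rightarrow> real \<Rightarrow> real \<Rightarrow> real \<Rightarrow> real \<Rightarrow> real \<Rightarrow> real" where
  "theta N a b q p r c = (c - c0 N a q r) / (c1 N b p r - c0 N a q r)"

end

theory Submission
  imports Defs
begin

text \<open>
  Test the embedding on a bump of radius \<open>\<rho> = t R\<close> centred at a point \<open>y\<close> with
  \<open>|y| = R\<close>, \<open>0 < t \<le> 1/2\<close>. On its support the weight \<open>|x|\<^sup>d\<close> is comparable to \<open>R\<^sup>d\<close>,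
  so its three norms scale like \<open>t\<^bsup>N/s\<^esup> R\<^bsup>(d+N)/s\<^esup>\<close>, with an extra factor
  \<open>(t R)\<^sup>-\<^sup>1\<close> for the gradient. The embedding thus yields
  \<open>t\<^bsup>N/r\<^esup> R\<^bsup>(c+N)/r\<^esup> \<lesssim> t\<^bsup>N/q\<^esup> R\<^bsup>(a+N)/q\<^esup> + t\<^bsup>N/p-1\<^esup> R\<^bsup>(b-p+N)/p\<^esup>\<close>.
  Letting \<open>R \<rightarrow> 0\<close> and \<open>R \<rightarrow> \<infinity>\<close> gives \<open>\<theta>\<^sub>c \<in> [0,1]\<close>; choosing \<open>R\<close> as the power of
  \<open>t\<close> that balances the two terms on the right and letting \<open>t \<rightarrow> 0\<close> gives the inequality for
  \<open>\<theta>\<^sub>c\<close>.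
\<close>

section \<open>Power inequalities at small and large scales\<close>

lemma bounded_powr_at_0_imp_nonneg:
  fixes e M :: real
  assumes bound: "\<And>t. 0 < t \<Longrightarrow> t \<le> 1/2 \<Longrightarrow> t powr e \<le> M"
  shows "0 \<le> e"
proof (rule ccontr)
  assume "\<not> 0 \<le> e"
  hence e: "e < 0" by simp
  define M' where "M' = max M 1 + 1"
  have M': "1 < M'" "M < M'" unfolding M'_def by auto
  define t where "t = min (1/2) (M' powr (1/e))"
  have t: "0 < t" "t \<le> 1/2" using M' by (auto simp: t_def)
  have "M' = (M' powr (1/e)) powr e" using e M' by (simp add: powr_powr)
  also have "\<dots> \<le> t powr e" using e t by (intro powr_mono2') (auto simp: t_def)
  also have "\<dots> \<le> M" using bound t .
  finally show False using M' by simp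
qed

lemma powr_le_sum_powr_at_0_imp_min_le:
  fixes \<alpha> \<beta> \<gamma> M :: real
  assumes bound: "\<And>t. 0 < t \<Longrightarrow> t \<le> 1/2 \<Longrightarrow> t powr \<alpha> \<le> M * (t powr \<beta> + t powr \<gamma>)"
  shows "min \<beta> \<gamma> \<le> \<alpha>"
proof -
  have "0 \<le> \<alpha> - min \<beta> \<gamma>"
  proof (rule bounded_powr_at_0_imp_nonneg)
    fix t :: real assume t: "0 < t" "t \<le> 1/2"
    have "t powr \<beta> \<le> t powr min \<beta> \<gamma>" "t powr \<gamma> \<le> t powr min \<beta> \<gamma>"
      using t by (auto intro!: powr_mono')
    hence "t powr \<alpha> \<le> \<bar>M\<bar> * (2 * t powr min \<beta> \<gamma>)"
      using bound[OF t] abs_ge_self[of M] t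
      by (smt (verit, best) mult_mono powr_ge_zero)
    thus "t powr (\<alpha> - min \<beta> \<gamma>) \<le> 2 * \<bar>M\<bar>"
      using t by (simp add: powr_diff field_simps)
  qed
  thus ?thesis by simp
qed

lemma powr_le_sum_powr_at_top_imp_le_max:
  fixes \<alpha> \<beta> \<gamma> M :: real
  assumes bound: "\<And>R. 2 \<le> R \<Longrightarrow> R powr \<alpha> \<le> M * (R powr \<beta> + R powr \<gamma>)"
  shows "\<alpha> \<le> max \<beta> \<gamma>"
proof -
  have "min (-\<beta>) (-\<gamma>) \<le> -\<alpha>"
  proof (rule powr_le_sum_powr_at_0_imp_min_le)
    fix t :: real assume t: "0 < t" "t \<le> 1/2"
    hence "2 \<le> 1/t" by (simp add: field_simps)
    thus "t powr (-\<alpha>) \<le> M * (t powr (-\<beta>) + t powr (-\<gamma>))"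
      using bound[of "1/t"] t by (simp add: powr_minus_divide powr_divide)
  qed
  thus ?thesis by simp
qed

lemma two_scale_powr_bound_imp_between:
  fixes K xa xb xc \<alpha> \<beta> \<gamma> :: real
  assumes bound: "\<And>R t. 0 < R \<Longrightarrow> 0 < t \<Longrightarrow> t \<le> 1/2 \<Longrightarrow>
      t powr xa * R powr \<alpha> \<le> K * (t powr xb * R powr \<beta> + t powr xc * R powr \<gamma>)"
  shows "min \<beta> \<gamma> \<le> \<alpha>" and "\<alpha> \<le> max \<beta> \<gamma>"
proof -
  define h :: real where "h = 1/2"
  define M where "M = \<bar>K\<bar> * max (h powr xb) (h powr xc) / h powr xa"
  have R_bound: "R powr \<alpha> \<le> M * (R powr \<beta> + R powr \<gamma>)" if "0 < R" for R
  proof -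
    have "h powr xa * R powr \<alpha> \<le> K * (h powr xb * R powr \<beta> + h powr xc * R powr \<gamma>)"
      using bound[OF that] by (simp add: h_def)
    also have "\<dots> \<le> \<bar>K\<bar> * (h powr xb * R powr \<beta> + h powr xc * R powr \<gamma>)"
      by (rule mult_right_mono) simp_all
    also have "\<dots> \<le> \<bar>K\<bar> * (max (h powr xb) (h powr xc) * (R powr \<beta> + R powr \<gamma>))"
      by (intro mult_left_mono) (auto simp: distrib_left intro!: add_mono mult_right_mono)
    finally show ?thesis by (simp add: M_def h_def field_simps)
  qed
  show "min \<beta> \<gamma> \<le> \<alpha>"
    by (rule powr_le_sum_powr_at_0_imp_min_le[where M = M]) (use R_bound in auto)
  show "\<alpha> \<le> max \<beta> \<gamma>"
    by (rule powr_le_sum_powr_at_top_imp_le_max[where M = M]) (use R_bound in auto)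
qed

lemma two_scale_powr_bound_imp_interpolation:
  fixes K xa xb xc \<alpha> \<beta> \<gamma> :: real
  assumes bound: "\<And>R t. 0 < R \<Longrightarrow> 0 < t \<Longrightarrow> t \<le> 1/2 \<Longrightarrow>
      t powr xa * R powr \<alpha> \<le> K * (t powr xb * R powr \<beta> + t powr xc * R powr \<gamma>)"
    and "\<beta> \<noteq> \<gamma>"
  defines "\<theta> \<equiv> (\<alpha> - \<beta>) / (\<gamma> - \<beta>)"
  shows "\<theta> \<in> {0..1} \<and> \<theta> * (xc - xb) \<le> xa - xb"
proof
  show "\<theta> \<in> {0..1}"
    using two_scale_powr_bound_imp_between[OF bound] \<open>\<beta> \<noteq> \<gamma>\<close>
    by (cases "\<beta> < \<gamma>") (auto simp: \<theta>_def field_simps)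
next
  have \<theta>: "\<alpha> - \<beta> = \<theta> * (\<gamma> - \<beta>)" using \<open>\<beta> \<noteq> \<gamma>\<close> by (simp add: \<theta>_def)
  have "0 \<le> xa + \<theta> * (xb - xc) - xb"
  proof (rule bounded_powr_at_0_imp_nonneg[where M = "2 * K"])
    fix t :: real assume t: "0 < t" "t \<le> 1/2"
    \<comment> \<open>the scale at which the two terms on the right balance\<close>
    define R where "R = t powr ((xb - xc) / (\<gamma> - \<beta>))"
    have R: "0 < R" using t by (simp add: R_def)
    have "R powr (\<gamma> - \<beta>) = t powr (xb - xc)"
      using \<open>\<beta> \<noteq> \<gamma>\<close> by (simp add: R_def powr_powr)
    hence balanced: "t powr xc * R powr \<gamma> = t powr xb * R powr \<beta>"
      using R t by (simp add: powr_diff field_simps)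
    have "R powr (\<alpha> - \<beta>) = t powr (\<theta> * (xb - xc))"
      using \<open>\<beta> \<noteq> \<gamma>\<close> by (simp add: R_def powr_powr \<theta> mult.commute)
    hence "R powr \<alpha> = R powr \<beta> * t powr (\<theta> * (xb - xc))"
      using R by (simp add: powr_diff field_simps)
    hence "t powr xa * R powr \<beta> * t powr (\<theta> * (xb - xc)) \<le> 2 * K * (t powr xb * R powr \<beta>)"
      using bound[OF R t] balanced by (simp add: ac_simps)
    thus "t powr (xa + \<theta> * (xb - xc) - xb) \<le> 2 * K"
      using R t by (simp add: powr_add powr_diff field_simps)
  qed
  thus "\<theta> * (xc - xb) \<le> xa - xb" by (simp add: algebra_simps)
qed

section \<open>Integrals of derivatives and weak gradients\<close>

lemma has_real_derivative_along_line:
  fixes w :: "'a::euclidean_space \<Rightarrow> real"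
  assumes w: "\<And>x. (w has_derivative w' x) (at x)"
  shows "((\<lambda>s. w (x + s *\<^sub>R i)) has_real_derivative w' (x + t *\<^sub>R i) i) (at t)"
proof -
  have "((\<lambda>s. x + s *\<^sub>R i) has_derivative (\<lambda>h. h *\<^sub>R i)) (at t)"
    by (auto intro!: derivative_eq_intros)
  from has_derivative_compose[OF this w]
  have "((\<lambda>s. w (x + s *\<^sub>R i)) has_derivative (\<lambda>h. w' (x + t *\<^sub>R i) (h *\<^sub>R i))) (at t)" .
  moreover have "linear (w' (x + t *\<^sub>R i))" using w has_derivative_linear by blast
  ultimately show ?thesis
    by (simp add: has_field_derivative_def linear_cmul mult_commute_abs)
qed

lemma integrable_continuous_vanishing_outside_compact:
  fixes f :: "'a::euclidean_space \<Rightarrow> 'b::{banach,second_countable_topology}"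
  assumes "continuous_on UNIV f" "compact K" "\<And>x. x \<notin> K \<Longrightarrow> f x = 0"
  shows "integrable lborel f"
proof -
  have "integrable lborel (\<lambda>x. indicator K x *\<^sub>R f x)"
    using borel_integrable_compact[OF assms(2) continuous_on_subset[OF assms(1)]] by auto
  also have "(\<lambda>x. indicator K x *\<^sub>R f x) = f"
    using assms(3) by (auto simp: fun_eq_iff indicator_def)
  finally show ?thesis .
qed

lemma difference_quotient_dominated:
  fixes w D :: "'a::euclidean_space \<Rightarrow> real"
  assumes w: "\<And>x. (w has_derivative w' x) (at x)" and D: "\<And>x. D x = w' x i"
    and "continuous_on UNIV D" and "compact K" and supp: "\<And>x. x \<notin> K \<Longrightarrow> w x = 0"
  obtains L M where "compact L"
    and "\<And>h x. 0 < h \<Longrightarrow> h \<le> 1 \<Longrightarrow> \<bar>(w (x + h *\<^sub>R i) - w x) / h\<bar> \<le> M * indicator L x"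
proof -
  define L where "L = (\<lambda>p. fst p - snd p *\<^sub>R i) ` (K \<times> {0..1::real})"
  define L' where "L' = (\<lambda>p. fst p + snd p *\<^sub>R i) ` (K \<times> {-1..1::real})"
  have "compact L" "compact L'" unfolding L_def L'_def
    by (intro compact_continuous_image compact_Times \<open>compact K\<close> compact_Icc continuous_intros)+
  hence "bounded (D ` L')"
    using \<open>continuous_on UNIV D\<close> by (intro compact_imp_bounded compact_continuous_image)
      (auto intro: continuous_on_subset)
  then obtain M where M: "\<And>x. x \<in> L' \<Longrightarrow> \<bar>D x\<bar> \<le> M"
    unfolding bounded_iff by auto
  show thesis
  proof (rule that[OF \<open>compact L\<close>])
    fix h :: real and x :: 'a assume h: "0 < h" "h \<le> 1"
    show "\<bar>(w (x + h *\<^sub>R i) - w x) / h\<bar> \<le> M * indicator L x"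
    proof (cases "x \<in> L")
      case False
      have "x \<notin> K"
        using False unfolding L_def by (force intro!: image_eqI[of _ _ "(x, 0)"])
      moreover have "x + h *\<^sub>R i \<notin> K"
        using False h unfolding L_def by (force intro!: image_eqI[of _ _ "(x + h *\<^sub>R i, h)"])
      ultimately show ?thesis using False by (simp add: supp)
    next
      case True
      then obtain k \<sigma> where k: "k \<in> K" "0 \<le> \<sigma>" "\<sigma> \<le> 1" "x = k - \<sigma> *\<^sub>R i"
        unfolding L_def by auto
      obtain z where z: "0 < z" "z < h"
        "w (x + h *\<^sub>R i) - w (x + 0 *\<^sub>R i) = (h - 0) * w' (x + z *\<^sub>R i) i"
        using MVT2[OF h(1), of "\<lambda>s. w (x + s *\<^sub>R i)" "\<lambda>s. w' (x + s *\<^sub>R i) i"]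
          has_real_derivative_along_line[OF w] by blast
      have "x + z *\<^sub>R i \<in> L'" unfolding L'_def using k z h
        by (intro image_eqI[of _ _ "(k, z - \<sigma>)"]) (auto simp: algebra_simps)
      with z h True M show ?thesis by (simp add: D)
    qed
  qed
qed

lemma integrable_lborel_translate:
  fixes w :: "'a::euclidean_space \<Rightarrow> 'b::{banach,second_countable_topology}"
  assumes "integrable lborel w"
  shows "integrable lborel (\<lambda>x. w (x + c))"
    and "integral\<^sup>L lborel (\<lambda>x. w (x + c)) = integral\<^sup>L lborel w"
proof -
  have [measurable]: "w \<in> borel_measurable borel"
    using borel_measurable_integrable[OF assms] by simp
  have "integrable (distr lborel borel ((+) c)) w"
    using assms by (simp add: lborel_distr_plus)
  thus "integrable lborel (\<lambda>x. w (x + c))"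
    by (subst (asm) integrable_distr_eq) (auto simp: add.commute)
  have "integral\<^sup>L lborel w = integral\<^sup>L (distr lborel borel ((+) c)) w"
    by (simp add: lborel_distr_plus)
  also have "\<dots> = integral\<^sup>L lborel (\<lambda>x. w (x + c))"
    by (subst integral_distr) (auto simp: add.commute)
  finally show "integral\<^sup>L lborel (\<lambda>x. w (x + c)) = integral\<^sup>L lborel w" ..
qed

lemma difference_quotients_tendsto:
  fixes w :: "'a::euclidean_space \<Rightarrow> real"
  assumes w: "\<And>x. (w has_derivative w' x) (at x)" and "filterlim h (at 0) sequentially"
  shows "(\<lambda>n. (w (x + h n *\<^sub>R i) - w x) / h n) \<longlonglongrightarrow> w' x i"
proof -
  have "((\<lambda>t. w (x + t *\<^sub>R i)) has_real_derivative w' x i) (at 0)"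
    using has_real_derivative_along_line[OF w, of x i 0] by simp
  hence "((\<lambda>t. (w (x + t *\<^sub>R i) - w x) / t) \<longlongrightarrow> w' x i) (at 0)"
    unfolding has_field_derivative_iff by simp
  from filterlim_compose[OF this assms(2)] show ?thesis by simp
qed

lemma integral_directional_derivative_eq_0:
  fixes w D :: "'a::euclidean_space \<Rightarrow> real"
  assumes w: "\<And>x. (w has_derivative w' x) (at x)" and D: "\<And>x. D x = w' x i"
    and D_cont: "continuous_on UNIV D" and "compact K" and supp: "\<And>x. x \<notin> K \<Longrightarrow> w x = 0"
  shows "integral\<^sup>L lborel D = 0"
proof -
  obtain L M where "compact L" and dominated:
    "\<And>h x. 0 < h \<Longrightarrow> h \<le> 1 \<Longrightarrow> \<bar>(w (x + h *\<^sub>R i) - w x) / h\<bar> \<le> M * indicator L x"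
    by (rule difference_quotient_dominated[OF w D D_cont \<open>compact K\<close>]) (use supp in auto)
  have w_cont: "continuous_on UNIV w"
    using w has_derivative_continuous by (meson continuous_at_imp_continuous_on)
  have [measurable]: "w \<in> borel_measurable borel" "D \<in> borel_measurable borel"
    using w_cont D_cont by (auto intro: borel_measurable_continuous_onI)
  have w_int: "integrable lborel w"
    by (rule integrable_continuous_vanishing_outside_compact[OF w_cont \<open>compact K\<close> supp])
  define h :: "nat \<Rightarrow> real" where "h n = 1 / Suc n" for n
  have h: "0 < h n" "h n \<le> 1" for n by (auto simp: h_def)
  have "filterlim h (at 0) sequentially"
    unfolding h_def using h(1) LIMSEQ_Suc[OF lim_inverse_n]
    by (auto simp: filterlim_at divide_inverse h_def intro!: always_eventually)
  define s where "s n x = (w (x + h n *\<^sub>R i) - w x) / h n" for n x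
  have [measurable]: "s n \<in> borel_measurable lborel" for n unfolding s_def by measurable
  have s_integral: "integral\<^sup>L lborel (s n) = 0" for n
    using integrable_lborel_translate[OF w_int, of "h n *\<^sub>R i"]
    unfolding s_def by (simp add: Bochner_Integration.integral_diff[OF _ w_int])
  have lim: "AE x in lborel. (\<lambda>n. s n x) \<longlonglongrightarrow> D x"
    using difference_quotients_tendsto[OF w \<open>filterlim h (at 0) sequentially\<close>] by (simp add: s_def D)
  have bound: "AE x in lborel. norm (s n x) \<le> M * indicator L x" for n
    using dominated[OF h] by (simp add: s_def)
  have "integrable lborel (\<lambda>x. M * indicator L x)"
    using \<open>compact L\<close> emeasure_compact_finite[OF \<open>compact L\<close>]
    by (auto intro!: integrable_mult_right borel_closed compact_imp_closed)
  from integral_dominated_convergence[OF _ _ this lim bound]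
  have "(\<lambda>n. integral\<^sup>L lborel (s n)) \<longlonglongrightarrow> integral\<^sup>L lborel D" by simp
  thus "integral\<^sup>L lborel D = 0" by (simp add: s_integral LIMSEQ_const_iff)
qed

lemma loc_int_punct_continuous:
  fixes f :: "'a::euclidean_space \<Rightarrow> 'b::{banach,second_countable_topology}"
  assumes "continuous_on UNIV f"
  shows "loc_int_punct f"
  unfolding loc_int_punct_def
proof safe
  fix K :: "'a set" assume "compact K"
  have "integrable lborel (\<lambda>x. indicator K x *\<^sub>R f x)"
    using borel_integrable_compact[OF \<open>compact K\<close> continuous_on_subset[OF assms]] by simp
  moreover have [measurable]: "K \<in> sets borel" "f \<in> borel_measurable borel"
    using \<open>compact K\<close> assms by (auto intro: borel_closed compact_imp_closed borel_measurable_continuous_onI)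
  ultimately show "set_integrable lebesgue K f"
    unfolding set_integrable_def by (simp add: integrable_completion)
qed

lemma test_fun_punct_derivatives:
  assumes "test_fun_punct \<phi>" and "i \<in> Basis"
  shows "(\<phi> has_derivative frechet_derivative \<phi> (at x)) (at x)"
    and "continuous_on UNIV \<phi>" and "continuous_on UNIV (pd i \<phi>)"
proof -
  have "smooth_fun \<phi>" using assms(1) by (simp add: test_fun_punct_def)
  hence diff: "\<phi> differentiable (at x)" "pd i \<phi> differentiable (at x)" for x
    using \<open>i \<in> Basis\<close> unfolding smooth_fun_def
    by (metis iter_pd.simps empty_set empty_subsetI list.simps(15) insert_subset)+
  thus "(\<phi> has_derivative frechet_derivative \<phi> (at x)) (at x)"
    by (simp add: frechet_derivative_works)
  show "continuous_on UNIV \<phi>" "continuous_on UNIV (pd i \<phi>)"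
    using diff by (meson continuous_at_imp_continuous_on differentiable_imp_continuous_within)+
qed

lemma weak_grad_punct_classical:
  fixes u :: "'a::euclidean_space \<Rightarrow> real" and g :: "'a \<Rightarrow> 'a"
  assumes u: "\<And>x. (u has_derivative (\<lambda>h. g x \<bullet> h)) (at x)" and g_cont: "continuous_on UNIV g"
    and "compact K" and u_supp: "\<And>x. x \<notin> K \<Longrightarrow> u x = 0" and g_supp: "\<And>x. x \<notin> K \<Longrightarrow> g x = 0"
  shows "weak_grad_punct u g"
  unfolding weak_grad_punct_def
proof (intro conjI allI impI ballI)
  have u_cont: "continuous_on UNIV u"
    using u has_derivative_continuous by (meson continuous_at_imp_continuous_on)
  show "loc_int_punct u" "loc_int_punct g"
    using u_cont g_cont by (auto intro: loc_int_punct_continuous)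
  fix \<phi> :: "'a \<Rightarrow> real" and i :: 'a
  assume "test_fun_punct \<phi>" "i \<in> Basis"
  note \<phi> = test_fun_punct_derivatives[OF this]
  define f1 where "f1 x = u x * pd i \<phi> x" for x
  define f2 where "f2 x = (g x \<bullet> i) * \<phi> x" for x
  have f1_cont: "continuous_on UNIV f1" and f2_cont: "continuous_on UNIV f2"
    unfolding f1_def[abs_def] f2_def[abs_def] by (intro continuous_intros u_cont g_cont \<phi>(2,3))+
  have "((\<lambda>x. u x * \<phi> x) has_derivative
      (\<lambda>h. u x * frechet_derivative \<phi> (at x) h + (g x \<bullet> h) * \<phi> x)) (at x)" for x
    using has_derivative_mult[OF u \<phi>(1)] by (simp add: algebra_simps)
  moreover have "f1 x + f2 x = u x * frechet_derivative \<phi> (at x) i + (g x \<bullet> i) * \<phi> x" for x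
    by (simp add: f1_def f2_def pd_def)
  ultimately have "integral\<^sup>L lborel (\<lambda>x. f1 x + f2 x) = 0"
    by (rule integral_directional_derivative_eq_0)
      (use \<open>compact K\<close> u_supp in \<open>auto intro!: continuous_intros f1_cont f2_cont\<close>)
  moreover have "integrable lborel f1" "integrable lborel f2"
    using \<open>compact K\<close> f1_cont f2_cont u_supp g_supp
    by (auto intro!: integrable_continuous_vanishing_outside_compact simp: f1_def f2_def)
  moreover have "f1 \<in> borel_measurable lborel" "f2 \<in> borel_measurable lborel"
    using f1_cont f2_cont by (auto intro: borel_measurable_continuous_onI)
  ultimately show "(\<integral>x. u x * pd i \<phi> x \<partial>lebesgue) = - (\<integral>x. (g x \<bullet> i) * \<phi> x \<partial>lebesgue)"
    unfolding f1_def[symmetric] f2_def[symmetric]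
    by (simp add: integral_completion Bochner_Integration.integral_add)
qed

section \<open>Bump functions\<close>

lemma has_real_derivative_pos_part_square:
  fixes t :: real
  shows "((\<lambda>t. (max 0 t)\<^sup>2) has_real_derivative 2 * max 0 t) (at t)"
proof (cases t "0::real" rule: linorder_cases)
  case less
  have "((\<lambda>t. 0) has_real_derivative 2 * max 0 t) (at t)" using less by simp
  thus ?thesis
    by (rule has_field_derivative_transform_within_open[of _ _ _ "{..<0}"]) (use less in auto)
next
  case greater
  have "((\<lambda>t. t\<^sup>2) has_real_derivative 2 * max 0 t) (at t)"
    using greater by (auto intro!: derivative_eq_intros)
  thus ?thesis
    by (rule has_field_derivative_transform_within_open[of _ _ _ "{0<..}"]) (use greater in auto)
next
  case equal
  have "((\<lambda>h. max 0 h) \<longlongrightarrow> max 0 0) (at (0::real))"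
    by (intro tendsto_intros)
  moreover have "\<forall>\<^sub>F h in at (0::real). ((max 0 (0 + h))\<^sup>2 - (max 0 0)\<^sup>2) / h = max 0 h"
    by (auto simp: eventually_at_filter power2_eq_square max_def)
  ultimately have "((\<lambda>h. ((max 0 (0 + h))\<^sup>2 - (max 0 0)\<^sup>2) / h) \<longlongrightarrow> 0) (at (0::real))"
    using tendsto_cong by force
  thus ?thesis using equal by (simp add: has_field_derivative_iff)
qed

definition bump :: "'a::real_inner \<Rightarrow> real" where
  "bump z = (max 0 (1 - z \<bullet> z))\<^sup>2"

definition bump_grad :: "'a::real_inner \<Rightarrow> 'a" where
  "bump_grad z = (-4 * max 0 (1 - z \<bullet> z)) *\<^sub>R z"

lemma has_derivative_bump: "(bump has_derivative (\<lambda>h. bump_grad z \<bullet> h)) (at z)"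
proof -
  have "((\<lambda>z. 1 - z \<bullet> z) has_derivative (\<lambda>h. - (2 * (z \<bullet> h)))) (at z)"
    by (auto intro!: derivative_eq_intros simp: inner_commute)
  from has_derivative_compose[OF this
      has_real_derivative_pos_part_square[unfolded has_field_derivative_def]]
  show ?thesis
    unfolding bump_def[abs_def] bump_grad_def by (simp add: algebra_simps)
qed

lemma continuous_on_bump_grad: "continuous_on S bump_grad"
  unfolding bump_grad_def[abs_def] by (intro continuous_intros)

lemma continuous_on_bump: "continuous_on S bump"
  unfolding bump_def[abs_def] by (intro continuous_intros)

lemma continuous_on_norm_bump_grad: "continuous_on S (\<lambda>z. norm (bump_grad z))"
  by (intro continuous_intros continuous_on_bump_grad)

lemma bump_nonneg: "0 \<le> bump z"
  by (simp add: bump_def)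

lemma bump_pos: "0 < bump 0"
  by (simp add: bump_def)

lemma bump_eq_0: "1 \<le> norm z \<Longrightarrow> bump z = 0"
  and bump_grad_eq_0: "1 \<le> norm z \<Longrightarrow> bump_grad z = 0"
  by (simp_all add: bump_def bump_grad_def flip: power2_norm_eq_inner)

definition scaled_bump :: "'a::real_inner \<Rightarrow> real \<Rightarrow> 'a \<Rightarrow> real" where
  "scaled_bump y \<rho> x = bump ((x - y) /\<^sub>R \<rho>)"

definition scaled_bump_grad :: "'a::real_inner \<Rightarrow> real \<Rightarrow> 'a \<Rightarrow> 'a" where
  "scaled_bump_grad y \<rho> x = bump_grad ((x - y) /\<^sub>R \<rho>) /\<^sub>R \<rho>"

lemma continuous_on_scaled_bump: "continuous_on S (scaled_bump y \<rho>)"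
  and continuous_on_scaled_bump_grad: "continuous_on S (scaled_bump_grad y \<rho>)"
  unfolding scaled_bump_def[abs_def] scaled_bump_grad_def[abs_def]
  by (auto intro!: continuous_intros continuous_on_compose2[OF continuous_on_bump]
      continuous_on_compose2[OF continuous_on_bump_grad])

lemma weak_grad_punct_scaled_bump:
  fixes y :: "'a::euclidean_space"
  assumes "0 < \<rho>"
  shows "weak_grad_punct (scaled_bump y \<rho>) (scaled_bump_grad y \<rho>)"
proof (rule weak_grad_punct_classical[where K = "cball y \<rho>"])
  fix x :: 'a
  have "((\<lambda>x. (x - y) /\<^sub>R \<rho>) has_derivative (\<lambda>h. h /\<^sub>R \<rho>)) (at x)"
    by (auto intro!: derivative_eq_intros)
  from has_derivative_compose[OF this has_derivative_bump]
  show "(scaled_bump y \<rho> has_derivative (\<lambda>h. scaled_bump_grad y \<rho> x \<bullet> h)) (at x)"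
    by (simp add: scaled_bump_def[abs_def] scaled_bump_grad_def)
  assume "x \<notin> cball y \<rho>"
  hence "1 \<le> norm (x - y) / \<rho>"
    using assms by (simp add: dist_norm norm_minus_commute)
  hence "1 \<le> norm ((x - y) /\<^sub>R \<rho>)"
    using assms by (simp add: divide_inverse_commute)
  thus "scaled_bump y \<rho> x = 0" "scaled_bump_grad y \<rho> x = 0"
    by (simp_all add: scaled_bump_def scaled_bump_grad_def bump_eq_0 bump_grad_eq_0)
qed (simp_all add: continuous_on_scaled_bump_grad)

section \<open>Weighted norms of rescaled profiles\<close>

lemma nn_integral_lborel_affine:
  fixes f :: "'a::euclidean_space \<Rightarrow> ennreal"
  assumes [measurable]: "f \<in> borel_measurable borel" and "0 < c"
  shows "(\<integral>\<^sup>+x. f x \<partial>lborel) = ennreal (c ^ DIM('a)) * (\<integral>\<^sup>+z. f (y + c *\<^sub>R z) \<partial>lborel)"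
  using \<open>0 < c\<close> by (subst lborel_affine[of c y])
    (simp_all add: nn_integral_density nn_integral_distr nn_integral_cmult)

lemma norm_powr_near_point_bounds:
  fixes y z :: "'a::real_normed_vector" and d \<rho> :: real
  assumes "0 < \<rho>" "\<rho> \<le> norm y / 2" "norm z \<le> 1"
  shows "min ((1/2) powr d) ((3/2) powr d) * norm y powr d \<le> norm (y + \<rho> *\<^sub>R z) powr d"
    and "norm (y + \<rho> *\<^sub>R z) powr d \<le> max ((1/2) powr d) ((3/2) powr d) * norm y powr d"
proof -
  have y: "0 < norm y" using assms by linarith
  define t where "t = norm (y + \<rho> *\<^sub>R z) / norm y"
  have "norm (\<rho> *\<^sub>R z) \<le> \<rho>" using assms by (simp add: mult_left_le)
  hence "norm y - \<rho> \<le> norm (y + \<rho> *\<^sub>R z)" "norm (y + \<rho> *\<^sub>R z) \<le> norm y + \<rho>"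
    using norm_triangle_ineq[of y "\<rho> *\<^sub>R z"] norm_triangle_ineq2[of y "- (\<rho> *\<^sub>R z)"] by auto
  hence t: "1/2 \<le> t" "t \<le> 3/2" using assms y by (auto simp: t_def field_simps)
  have "(1/2) powr d \<le> t powr d \<and> t powr d \<le> (3/2) powr d" if "0 \<le> d"
    using t that by (auto intro!: powr_mono2)
  moreover have "(3/2) powr d \<le> t powr d \<and> t powr d \<le> (1/2) powr d" if "d \<le> 0"
    using t that by (auto intro!: powr_mono2')
  ultimately have "min ((1/2) powr d) ((3/2) powr d) \<le> t powr d \<and> t powr d \<le> max ((1/2) powr d) ((3/2) powr d)"
    by (cases "0 \<le> d") (simp_all add: min_le_iff_disj le_max_iff_disj)
  moreover have "norm (y + \<rho> *\<^sub>R z) powr d = t powr d * norm y powr d"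
    using y by (simp add: t_def powr_divide)
  ultimately show "min ((1/2) powr d) ((3/2) powr d) * norm y powr d \<le> norm (y + \<rho> *\<^sub>R z) powr d"
    and "norm (y + \<rho> *\<^sub>R z) powr d \<le> max ((1/2) powr d) ((3/2) powr d) * norm y powr d"
    by (simp_all add: mult_right_mono)
qed

lemma nn_integral_profile_positive_real:
  fixes G :: "'a::euclidean_space \<Rightarrow> real"
  assumes G_cont: "continuous_on UNIV G" and G_supp: "\<And>z. 1 \<le> norm z \<Longrightarrow> G z = 0"
    and "0 < G z0"
  obtains I where "(\<integral>\<^sup>+z. G z \<partial>lborel) = ennreal I" and "0 < I"
proof -
  have [measurable]: "G \<in> borel_measurable borel"
    using G_cont by (rule borel_measurable_continuous_onI)
  obtain \<eta> where "0 < \<eta>" and \<eta>: "\<And>z. dist z z0 < \<eta> \<Longrightarrow> dist (G z) (G z0) < G z0 / 2"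
    using G_cont \<open>0 < G z0\<close> unfolding continuous_on_iff by (metis UNIV_I half_gt_zero)
  have "ennreal (G z0 / 2) * indicator (ball z0 \<eta>) z \<le> ennreal (G z)" for z
    using \<eta>[of z] abs_ge_self[of "G z0 - G z"]
    by (auto simp: dist_commute dist_real_def indicator_def intro!: ennreal_leI)
  hence "ennreal (G z0 / 2) * emeasure lborel (ball z0 \<eta>) \<le> (\<integral>\<^sup>+z. G z \<partial>lborel)"
    by (subst nn_integral_cmult_indicator[symmetric]) (auto intro!: nn_integral_mono)
  moreover have "0 < ennreal (G z0 / 2) * emeasure lborel (ball z0 \<eta>)"
    using \<open>0 < \<eta>\<close> \<open>0 < G z0\<close> by (simp add: emeasure_ball ennreal_zero_less_mult_iff)
  ultimately have pos: "0 < (\<integral>\<^sup>+z. G z \<partial>lborel)" by (rule order.strict_trans2[rotated])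
  have "compact (G ` cball 0 1)"
    by (intro compact_continuous_image continuous_on_subset[OF G_cont]) auto
  then obtain M where M: "\<forall>z\<in>cball 0 1. \<bar>G z\<bar> \<le> M"
    using compact_imp_bounded[of "G ` cball 0 1"] unfolding bounded_iff by auto
  have "ennreal (G z) \<le> ennreal M * indicator (cball 0 1) z" for z
    using M abs_ge_self[of "G z"] G_supp[of z] by (cases "z \<in> cball 0 1") (fastforce intro!: ennreal_leI)+
  hence "(\<integral>\<^sup>+z. G z \<partial>lborel) \<le> ennreal M * emeasure lborel (cball (0::'a) 1)"
    by (subst nn_integral_cmult_indicator[symmetric]) (auto intro!: nn_integral_mono)
  also have "\<dots> < \<infinity>"
    using emeasure_lborel_cball_finite[of "0::'a" 1] by (simp add: ennreal_mult_less_top)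
  finally show thesis
    using pos by (intro that[of "enn2real (\<integral>\<^sup>+z. G z \<partial>lborel)"]) (auto simp: less_top enn2real_positive_iff)
qed

lemma scaled_profile_integrand_bounds:
  fixes y z :: "'a::real_normed_vector" and F :: "'a \<Rightarrow> real" and d s \<rho> A :: real
  assumes "\<And>z. 0 \<le> F z" and "\<And>z. 1 \<le> norm z \<Longrightarrow> F z = 0"
    and \<rho>: "0 < \<rho>" "\<rho> \<le> norm y / 2" and "0 \<le> A"
  defines "m \<equiv> min ((1/2) powr d) ((3/2) powr d)" and "M \<equiv> max ((1/2) powr d) ((3/2) powr d)"
  shows "m * (norm y powr d * A powr s) * F z powr s \<le> norm (y + \<rho> *\<^sub>R z) powr d * (A * F z) powr s
    \<and> norm (y + \<rho> *\<^sub>R z) powr d * (A * F z) powr s \<le> M * (norm y powr d * A powr s) * F z powr s"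
proof (cases "F z = 0")
  case False
  hence "norm z \<le> 1" using assms(2) by force
  note near = norm_powr_near_point_bounds[OF \<rho> this, of d]
  have "(A * F z) powr s = A powr s * F z powr s"
    using \<open>0 \<le> A\<close> assms(1) by (simp add: powr_mult)
  thus ?thesis
    using mult_right_mono[OF near(1), of "A powr s * F z powr s"]
      mult_right_mono[OF near(2), of "A powr s * F z powr s"]
    by (simp add: m_def M_def mult_ac)
qed simp

lemma wint_scaled_profile_bounds:
  fixes F :: "'a::euclidean_space \<Rightarrow> real" and u :: "'a \<Rightarrow> 'b::real_normed_vector"
    and y :: 'a and d s \<rho> A :: real
  assumes [measurable]: "F \<in> borel_measurable borel" and F_nonneg: "\<And>z. 0 \<le> F z"
    and F_supp: "\<And>z. 1 \<le> norm z \<Longrightarrow> F z = 0"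
    and \<rho>: "0 < \<rho>" "\<rho> \<le> norm y / 2" and "0 \<le> A"
    and u: "\<And>x. norm (u x) = A * F ((x - y) /\<^sub>R \<rho>)"
  defines "m \<equiv> min ((1/2) powr d) ((3/2) powr d)" and "M \<equiv> max ((1/2) powr d) ((3/2) powr d)"
    and "X \<equiv> \<rho> ^ DIM('a) * norm y powr d * A powr s"
    and "I \<equiv> \<integral>\<^sup>+z. ennreal (F z powr s) \<partial>lborel"
  shows "ennreal (m * X) * I \<le> wint d s u" and "wint d s u \<le> ennreal (M * X) * I"
proof -
  define J where "J c = (\<integral>\<^sup>+z. ennreal (c * (norm y powr d * A powr s) * F z powr s) \<partial>lborel)" for c
  have "wint d s u = (\<integral>\<^sup>+x. ennreal (norm x powr d * (A * F ((x - y) /\<^sub>R \<rho>)) powr s) \<partial>lborel)"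
    by (simp add: wint_def u nn_integral_completion)
  also have "\<dots> = ennreal (\<rho> ^ DIM('a)) *
      (\<integral>\<^sup>+z. ennreal (norm (y + \<rho> *\<^sub>R z) powr d * (A * F z) powr s) \<partial>lborel)"
    using \<rho>(1) by (subst nn_integral_lborel_affine[where c = \<rho> and y = y]) simp_all
  finally have "ennreal (\<rho> ^ DIM('a)) * J m \<le> wint d s u \<and> wint d s u \<le> ennreal (\<rho> ^ DIM('a)) * J M"
    using scaled_profile_integrand_bounds[where F = F and d = d and s = s,
        OF F_nonneg F_supp \<rho> \<open>0 \<le> A\<close>]
    unfolding J_def m_def M_def by (auto intro!: mult_left_mono nn_integral_mono ennreal_leI)
  moreover have "ennreal (c * X) * I = ennreal (\<rho> ^ DIM('a)) * J c" if "0 \<le> c" for c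
  proof -
    have "0 \<le> c * (norm y powr d * A powr s)" using that by simp
    hence "ennreal (c * X) = ennreal (\<rho> ^ DIM('a)) * ennreal (c * (norm y powr d * A powr s))"
      using \<rho>(1) by (simp add: X_def ennreal_mult[symmetric] mult_ac)
    thus ?thesis
      unfolding I_def J_def using that by (simp add: nn_integral_cmult ennreal_mult mult.assoc)
  qed
  moreover have "0 \<le> m" "0 \<le> M" by (simp_all add: m_def M_def le_max_iff_disj)
  ultimately show "ennreal (m * X) * I \<le> wint d s u" and "wint d s u \<le> ennreal (M * X) * I"
    by simp_all
qed

lemma wnorm_scaled_profile_bounds:
  fixes F :: "'a::euclidean_space \<Rightarrow> real" and u :: "'a \<Rightarrow> 'b::{real_normed_vector,second_countable_topology}"
    and y :: 'a and d s \<rho> A I :: real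
  assumes F_meas: "F \<in> borel_measurable borel" and F_nonneg: "\<And>z. 0 \<le> F z"
    and F_supp: "\<And>z. 1 \<le> norm z \<Longrightarrow> F z = 0" and "0 < s"
    and I: "(\<integral>\<^sup>+z. ennreal (F z powr s) \<partial>lborel) = ennreal I" "0 < I"
    and \<rho>: "0 < \<rho>" "\<rho> \<le> norm y / 2" and "0 < A" and u_meas: "u \<in> borel_measurable lebesgue"
    and u: "\<And>x. norm (u x) = A * F ((x - y) /\<^sub>R \<rho>)"
  defines "m \<equiv> min ((1/2) powr d) ((3/2) powr d)" and "M \<equiv> max ((1/2) powr d) ((3/2) powr d)"
    and "P \<equiv> \<rho> ^ DIM('a) * norm y powr d"
  shows "in_wL d s u \<and> (m * I) powr (1/s) * A * P powr (1/s) \<le> wnorm d s u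
    \<and> wnorm d s u \<le> (M * I) powr (1/s) * A * P powr (1/s)"
proof -
  have "0 < m" "0 < M" by (simp_all add: m_def M_def less_max_iff_disj)
  have "0 < norm y" using \<rho> by linarith
  hence "0 < P" using \<rho> by (simp add: P_def)
  note bounds = wint_scaled_profile_bounds[where d = d and s = s,
      OF F_meas F_nonneg F_supp \<rho> less_imp_le[OF \<open>0 < A\<close>] u, folded m_def M_def, unfolded I(1)]
  have lower: "ennreal (m * (P * A powr s) * I) \<le> wint d s u"
    and upper: "wint d s u \<le> ennreal (M * (P * A powr s) * I)"
    using bounds \<open>0 < A\<close> \<open>0 < m\<close> \<open>0 < M\<close> \<open>0 < P\<close> \<open>0 < I\<close> by (simp_all add: P_def ennreal_mult mult_ac)
  define W where "W = enn2real (wint d s u)"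
  have "wint d s u < \<infinity>" using upper by (simp add: le_less_trans)
  hence W: "wint d s u = ennreal W" "0 \<le> W" by (simp_all add: W_def less_top)
  hence W_bounds: "m * (P * A powr s) * I \<le> W" "W \<le> M * (P * A powr s) * I"
    using lower upper \<open>0 < M\<close> \<open>0 < P\<close> \<open>0 < I\<close> by simp_all
  have root: "(c * (P * A powr s) * I) powr (1/s) = (c * I) powr (1/s) * A * P powr (1/s)"
    if "0 \<le> c" for c
    using that \<open>0 < A\<close> \<open>0 < P\<close> \<open>0 < I\<close> \<open>0 < s\<close> by (simp add: powr_mult powr_powr mult_ac)
  have "wnorm d s u = W powr (1/s)" by (simp add: wnorm_def W)
  thus ?thesis
    using W W_bounds \<open>0 < m\<close> \<open>0 < M\<close> \<open>0 < P\<close> \<open>0 < I\<close> \<open>0 < s\<close> u_meas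
    by (auto simp: in_wL_def root[symmetric] intro!: powr_mono2)
qed

lemma wnorm_scaled_profile_uniform_bounds:
  fixes F :: "'a::euclidean_space \<Rightarrow> real" and d s :: real
  assumes F_cont: "continuous_on UNIV F" and F_nonneg: "\<And>z. 0 \<le> F z"
    and F_supp: "\<And>z. 1 \<le> norm z \<Longrightarrow> F z = 0" and "0 < F z0" and "0 < s"
  obtains k K where "0 < k" and
    "\<And>y \<rho> A (u :: 'a \<Rightarrow> 'b::{real_normed_vector,second_countable_topology}).
       0 < \<rho> \<Longrightarrow> \<rho> \<le> norm y / 2 \<Longrightarrow> 0 < A \<Longrightarrow> u \<in> borel_measurable lebesgue \<Longrightarrow>
       (\<And>x. norm (u x) = A * F ((x - y) /\<^sub>R \<rho>)) \<Longrightarrow>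
       in_wL d s u \<and> k * A * (\<rho> ^ DIM('a) * norm y powr d) powr (1/s) \<le> wnorm d s u
         \<and> wnorm d s u \<le> K * A * (\<rho> ^ DIM('a) * norm y powr d) powr (1/s)"
proof -
  have "continuous_on UNIV (\<lambda>z. F z powr s)"
    using \<open>0 < s\<close> F_nonneg by (intro continuous_on_powr' F_cont continuous_on_const) auto
  then obtain I where I: "(\<integral>\<^sup>+z. ennreal (F z powr s) \<partial>lborel) = ennreal I" "0 < I"
    using nn_integral_profile_positive_real[of "\<lambda>z. F z powr s" z0] \<open>0 < F z0\<close> F_supp by auto
  have "0 < min ((1/2) powr d) ((3/2) powr d) * I" using I(2) by simp
  hence k_pos: "0 < (min ((1/2) powr d) ((3/2) powr d) * I) powr (1/s)" by (metis powr_gt_zero less_irrefl)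
  show thesis
    using wnorm_scaled_profile_bounds[OF borel_measurable_continuous_onI[OF F_cont] F_nonneg F_supp
        \<open>0 < s\<close> I, where d = d]
    by (rule that[OF k_pos])
qed

section \<open>Testing the embedding on bumps\<close>

lemma wnorm_scaled_bump_bounds:
  fixes d s :: real
  assumes "0 < s"
  obtains k K where "0 < k" and
    "\<And>y :: 'a::euclidean_space. \<And>\<rho>. 0 < \<rho> \<Longrightarrow> \<rho> \<le> norm y / 2 \<Longrightarrow> in_wL d s (scaled_bump y \<rho>)
       \<and> k * (\<rho> ^ DIM('a) * norm y powr d) powr (1/s) \<le> wnorm d s (scaled_bump y \<rho>)
       \<and> wnorm d s (scaled_bump y \<rho>) \<le> K * (\<rho> ^ DIM('a) * norm y powr d) powr (1/s)"
proof -
  obtain k K where "0 < k" and bounds: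
    "\<And>y \<rho> A (u :: 'a \<Rightarrow> real). 0 < \<rho> \<Longrightarrow> \<rho> \<le> norm y / 2 \<Longrightarrow> 0 < A \<Longrightarrow>
       u \<in> borel_measurable lebesgue \<Longrightarrow> (\<And>x. norm (u x) = A * bump ((x - y) /\<^sub>R \<rho>)) \<Longrightarrow>
       in_wL d s u \<and> k * A * (\<rho> ^ DIM('a) * norm y powr d) powr (1/s) \<le> wnorm d s u
         \<and> wnorm d s u \<le> K * A * (\<rho> ^ DIM('a) * norm y powr d) powr (1/s)"
    using wnorm_scaled_profile_uniform_bounds[where 'a = 'a and 'b = real and d = d,
        OF continuous_on_bump bump_nonneg bump_eq_0 bump_pos \<open>0 < s\<close>] by metis
  show thesis
  proof (rule that[OF \<open>0 < k\<close>])
    fix y :: 'a and \<rho> :: real assume "0 < \<rho>" "\<rho> \<le> norm y / 2"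
    moreover have "scaled_bump y \<rho> \<in> borel_measurable lebesgue"
      by (intro measurable_completion) (simp add: borel_measurable_continuous_onI continuous_on_scaled_bump)
    ultimately show "in_wL d s (scaled_bump y \<rho>)
       \<and> k * (\<rho> ^ DIM('a) * norm y powr d) powr (1/s) \<le> wnorm d s (scaled_bump y \<rho>)
       \<and> wnorm d s (scaled_bump y \<rho>) \<le> K * (\<rho> ^ DIM('a) * norm y powr d) powr (1/s)"
      using bounds[of \<rho> y 1] by (simp add: scaled_bump_def bump_nonneg)
  qed
qed

lemma wnorm_scaled_bump_grad_bound:
  fixes d s :: real
  assumes "0 < s"
  obtains K where
    "\<And>y :: 'a::euclidean_space. \<And>\<rho>. 0 < \<rho> \<Longrightarrow> \<rho> \<le> norm y / 2 \<Longrightarrow> in_wL d s (scaled_bump_grad y \<rho>)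
       \<and> wnorm d s (scaled_bump_grad y \<rho>) \<le> K * (\<rho> ^ DIM('a) * norm y powr d) powr (1/s) / \<rho>"
proof -
  obtain e :: 'a where "e \<in> Basis" using nonempty_Basis by blast
  hence pos: "0 < norm (bump_grad ((1/2) *\<^sub>R e))" by (simp add: bump_grad_def)
  have supp: "\<And>z::'a. 1 \<le> norm z \<Longrightarrow> norm (bump_grad z) = 0" by (simp add: bump_grad_eq_0)
  obtain k K where bounds:
    "\<And>y \<rho> A (u :: 'a \<Rightarrow> 'a). 0 < \<rho> \<Longrightarrow> \<rho> \<le> norm y / 2 \<Longrightarrow> 0 < A \<Longrightarrow>
       u \<in> borel_measurable lebesgue \<Longrightarrow> (\<And>x. norm (u x) = A * norm (bump_grad ((x - y) /\<^sub>R \<rho>))) \<Longrightarrow>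
       in_wL d s u \<and> k * A * (\<rho> ^ DIM('a) * norm y powr d) powr (1/s) \<le> wnorm d s u
         \<and> wnorm d s u \<le> K * A * (\<rho> ^ DIM('a) * norm y powr d) powr (1/s)"
    using wnorm_scaled_profile_uniform_bounds[where 'a = 'a and 'b = 'a and d = d,
        OF continuous_on_norm_bump_grad norm_ge_zero supp pos \<open>0 < s\<close>] by metis
  show thesis
  proof (rule that)
    fix y :: 'a and \<rho> :: real assume \<rho>: "0 < \<rho>" "\<rho> \<le> norm y / 2"
    have "scaled_bump_grad y \<rho> \<in> borel_measurable lebesgue"
      by (intro measurable_completion) (simp add: borel_measurable_continuous_onI continuous_on_scaled_bump_grad)
    moreover have "norm (scaled_bump_grad y \<rho> x) = 1 / \<rho> * norm (bump_grad ((x - y) /\<^sub>R \<rho>))" for x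
      using \<rho>(1) by (simp add: scaled_bump_grad_def divide_inverse mult.commute)
    moreover have "0 < 1 / \<rho>" using \<rho>(1) by simp
    ultimately have "in_wL d s (scaled_bump_grad y \<rho>)
       \<and> wnorm d s (scaled_bump_grad y \<rho>) \<le> K * (1 / \<rho>) * (\<rho> ^ DIM('a) * norm y powr d) powr (1/s)"
      using bounds[OF \<rho>] by blast
    thus "in_wL d s (scaled_bump_grad y \<rho>)
       \<and> wnorm d s (scaled_bump_grad y \<rho>) \<le> K * (\<rho> ^ DIM('a) * norm y powr d) powr (1/s) / \<rho>"
      by simp
  qed
qed

lemma embedding_imp_scaled_bump_inequality:
  fixes a b c p q r :: real
  assumes "0 < p" "0 < q" "0 < r" and "W_embeds TYPE('a::euclidean_space) a b q p c r"
  obtains K where "\<And>y :: 'a. \<And>\<rho>. 0 < \<rho> \<Longrightarrow> \<rho> \<le> norm y / 2 \<Longrightarrow>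
    (\<rho> ^ DIM('a) * norm y powr c) powr (1/r)
      \<le> K * ((\<rho> ^ DIM('a) * norm y powr a) powr (1/q) + (\<rho> ^ DIM('a) * norm y powr b) powr (1/p) / \<rho>)"
proof -
  obtain C where embedding: "\<And>(u :: 'a \<Rightarrow> real) g. weak_grad_punct u g \<Longrightarrow> in_wL a q u \<Longrightarrow> in_wL b p g
      \<Longrightarrow> wnorm c r u \<le> C * (wnorm a q u + wnorm b p g)"
    using assms(4) unfolding W_embeds_def by blast
  obtain k1 where "0 < k1" and lower: "\<And>y :: 'a. \<And>\<rho>. 0 < \<rho> \<Longrightarrow> \<rho> \<le> norm y / 2 \<Longrightarrow>
      k1 * (\<rho> ^ DIM('a) * norm y powr c) powr (1/r) \<le> wnorm c r (scaled_bump y \<rho>)"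
    using wnorm_scaled_bump_bounds[where 'a = 'a and d = c, OF \<open>0 < r\<close>] by metis
  obtain K2 where upper_u: "\<And>y :: 'a. \<And>\<rho>. 0 < \<rho> \<Longrightarrow> \<rho> \<le> norm y / 2 \<Longrightarrow> in_wL a q (scaled_bump y \<rho>)
      \<and> wnorm a q (scaled_bump y \<rho>) \<le> K2 * (\<rho> ^ DIM('a) * norm y powr a) powr (1/q)"
    using wnorm_scaled_bump_bounds[where 'a = 'a and d = a, OF \<open>0 < q\<close>] by metis
  obtain K3 where upper_g: "\<And>y :: 'a. \<And>\<rho>. 0 < \<rho> \<Longrightarrow> \<rho> \<le> norm y / 2 \<Longrightarrow> in_wL b p (scaled_bump_grad y \<rho>)
      \<and> wnorm b p (scaled_bump_grad y \<rho>) \<le> K3 * (\<rho> ^ DIM('a) * norm y powr b) powr (1/p) / \<rho>"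
    using wnorm_scaled_bump_grad_bound[where 'a = 'a and d = b, OF \<open>0 < p\<close>] by metis
  show thesis
  proof (rule that[of "\<bar>C\<bar> * max K2 K3 / k1"])
    fix y :: 'a and \<rho> :: real assume \<rho>: "0 < \<rho>" "\<rho> \<le> norm y / 2"
    define Y Z where "Y = (\<rho> ^ DIM('a) * norm y powr a) powr (1/q)"
      and "Z = (\<rho> ^ DIM('a) * norm y powr b) powr (1/p) / \<rho>"
    have "0 \<le> Y" "0 \<le> Z" using \<rho>(1) by (simp_all add: Y_def Z_def)
    have "k1 * (\<rho> ^ DIM('a) * norm y powr c) powr (1/r)
        \<le> C * (wnorm a q (scaled_bump y \<rho>) + wnorm b p (scaled_bump_grad y \<rho>))"
      using lower[OF \<rho>] upper_u[OF \<rho>] upper_g[OF \<rho>] embedding weak_grad_punct_scaled_bump[OF \<rho>(1)]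
      by (blast intro: order_trans)
    also have "\<dots> \<le> \<bar>C\<bar> * (wnorm a q (scaled_bump y \<rho>) + wnorm b p (scaled_bump_grad y \<rho>))"
      by (rule mult_right_mono) (simp_all add: wnorm_def)
    also have "\<dots> \<le> \<bar>C\<bar> * (K2 * Y + K3 * Z)"
      using upper_u[OF \<rho>] upper_g[OF \<rho>]
      by (intro mult_left_mono add_mono) (simp_all add: Y_def Z_def)
    also have "\<dots> \<le> \<bar>C\<bar> * max K2 K3 * (Y + Z)"
      using \<open>0 \<le> Y\<close> \<open>0 \<le> Z\<close>
      by (simp add: distrib_left mult.assoc mult_left_mono add_mono mult_right_mono)
    finally show "(\<rho> ^ DIM('a) * norm y powr c) powr (1/r) \<le> \<bar>C\<bar> * max K2 K3 / k1 * (Y + Z)"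
      using \<open>0 < k1\<close> by (simp add: field_simps)
  qed
qed

lemma powr_scaled_ball:
  fixes t R d s :: real
  assumes "0 < t" "0 < R"
  shows "((t * R) ^ n * R powr d) powr (1/s) = t powr (n/s) * R powr ((d + n)/s)"
proof -
  have "(t * R) ^ n * R powr d = t powr n * R powr (d + n)"
    using assms by (simp add: powr_realpow[symmetric] powr_mult powr_add)
  thus ?thesis
    using assms by (simp add: powr_mult powr_powr add_divide_distrib)
qed

lemma embedding_scaling_inequality:
  fixes a b c p q r :: real
  assumes "0 < p" "0 < q" "0 < r" and "W_embeds TYPE('a::euclidean_space) a b q p c r"
  defines "N \<equiv> real DIM('a)"
  obtains K where "\<And>R t. 0 < R \<Longrightarrow> 0 < t \<Longrightarrow> t \<le> 1/2 \<Longrightarrow>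
    t powr (N/r) * R powr ((c + N)/r)
      \<le> K * (t powr (N/q) * R powr ((a + N)/q) + t powr (N/p - 1) * R powr ((b - p + N)/p))"
proof -
  obtain K where bump_inequality: "\<And>y :: 'a. \<And>\<rho>. 0 < \<rho> \<Longrightarrow> \<rho> \<le> norm y / 2 \<Longrightarrow>
      (\<rho> ^ DIM('a) * norm y powr c) powr (1/r)
        \<le> K * ((\<rho> ^ DIM('a) * norm y powr a) powr (1/q) + (\<rho> ^ DIM('a) * norm y powr b) powr (1/p) / \<rho>)"
    using embedding_imp_scaled_bump_inequality[OF assms(1-4)] by metis
  obtain e :: 'a where "e \<in> Basis" using nonempty_Basis by blast
  show thesis
  proof (rule that)
    fix R t :: real assume R: "0 < R" and t: "0 < t" "t \<le> 1/2"
    have norm_y: "norm (R *\<^sub>R e) = R" using R \<open>e \<in> Basis\<close> by simp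
    have ball: "((t * R) ^ DIM('a) * R powr d) powr (1/s) = t powr (N/s) * R powr ((d + N)/s)" for d s
      using R t by (simp add: N_def powr_scaled_ball)
    have "(b - p + N)/p = (b + N)/p - 1" using \<open>0 < p\<close> by (simp add: field_simps)
    hence grad: "t powr (N/p - 1) * R powr ((b - p + N)/p) = t powr (N/p) * R powr ((b + N)/p) / (t * R)"
      using R t by (simp add: powr_diff)
    have "0 < t * R" "t * R \<le> norm (R *\<^sub>R e) / 2"
      using R t norm_y mult_right_mono[OF t(2), of R] by simp_all
    from bump_inequality[OF this, unfolded norm_y ball grad[symmetric]]
    show "t powr (N/r) * R powr ((c + N)/r)
      \<le> K * (t powr (N/q) * R powr ((a + N)/q) + t powr (N/p - 1) * R powr ((b - p + N)/p))" .
  qed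
qed

lemma le_max_sob_exp_if_inverse_ge:
  fixes p q r :: real and N :: nat
  assumes "0 < p" "0 < q" "0 < r" and "min (1/q) (1/p - 1/real N) \<le> 1/r"
  shows "ereal r \<le> max (sob_exp p N) (ereal q)"
proof (cases "real N \<le> p")
  case False
  define P where "P = real N * p / (real N - p)"
  have "0 < P" and "1/p - 1/real N = inverse P"
    using False \<open>0 < p\<close> by (auto simp: P_def field_simps)
  hence "min (inverse q) (inverse P) \<le> inverse r"
    using assms(4) by (simp add: divide_inverse)
  hence "r \<le> q \<or> r \<le> P"
    using \<open>0 < P\<close> assms(2,3) by (auto simp: min_def inverse_le_iff_le split: if_splits)
  thus ?thesis using False by (auto simp: sob_exp_def P_def le_max_iff_disj)
qed (simp add: sob_exp_def)

lemma embedding_imp_exponent_bound: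
  fixes a b c p q r :: real
  assumes "0 < p" "0 < q" "0 < r" and "W_embeds TYPE('a::euclidean_space) a b q p c r"
  shows "min (1/q) (1/p - 1/real DIM('a)) \<le> 1/r"
proof -
  define N where "N = real DIM('a)"
  obtain K where scaling: "\<And>R t. 0 < R \<Longrightarrow> 0 < t \<Longrightarrow> t \<le> 1/2 \<Longrightarrow>
      t powr (N/r) * R powr ((c + N)/r)
        \<le> K * (t powr (N/q) * R powr ((a + N)/q) + t powr (N/p - 1) * R powr ((b - p + N)/p))"
    using embedding_scaling_inequality[OF assms, folded N_def] by metis
  have "0 < N" by (simp add: N_def)
  hence "N * min (1/q) (1/p - 1/N) = min (N/q) (N/p - 1)"
    by (simp add: min_mult_distrib_left right_diff_distrib)
  also have "\<dots> \<le> N * (1/r)"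
    by (simp, rule powr_le_sum_powr_at_0_imp_min_le[where M = K]) (use scaling[of 1] in simp)
  finally have "N * min (1/q) (1/p - 1/N) \<le> N * (1/r)" .
  thus ?thesis
    using \<open>0 < N\<close> unfolding N_def by (metis mult_le_cancel_left_pos)
qed

lemma embedding_imp_theta_bounds:
  fixes a b c p q r :: real
  assumes "0 < p" "0 < q" "0 < r" and "W_embeds TYPE('a::euclidean_space) a b q p c r"
  defines "N \<equiv> DIM('a)"
  assumes "(a + real N) / q \<noteq> (b - p + real N) / p"
  shows "theta N a b q p r c \<in> {0..1} \<and> theta N a b q p r c * (1/p - 1/real N - 1/q) \<le> 1/r - 1/q"
proof -
  obtain K where scaling: "\<And>R t. 0 < R \<Longrightarrow> 0 < t \<Longrightarrow> t \<le> 1/2 \<Longrightarrow>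
      t powr (N/r) * R powr ((c + N)/r)
        \<le> K * (t powr (N/q) * R powr ((a + N)/q) + t powr (N/p - 1) * R powr ((b - p + N)/p))"
    using embedding_scaling_inequality[OF assms(1-4), folded N_def] by metis
  define \<theta> where "\<theta> = theta N a b q p r c"
  have "\<theta> = ((c + N)/r - (a + N)/q) / ((b - p + N)/p - (a + N)/q)"
    using assms(1-3) by (simp add: \<theta>_def theta_def c0_def c1_def field_simps)
  with two_scale_powr_bound_imp_interpolation[OF scaling assms(6)]
  have "\<theta> \<in> {0..1}" and interpolation: "\<theta> * ((N/p - 1) - N/q) \<le> N/r - N/q"
    by simp_all
  have "0 < real N" by (simp add: N_def)
  hence "real N * (\<theta> * (1/p - 1/N - 1/q)) = \<theta> * ((N/p - 1) - N/q)"
    and "real N * (1/r - 1/q) = N/r - N/q"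
    by (simp_all add: field_simps)
  with interpolation \<open>0 < real N\<close> have "\<theta> * (1/p - 1/N - 1/q) \<le> 1/r - 1/q"
    by (metis mult_le_cancel_left_pos)
  with \<open>\<theta> \<in> {0..1}\<close> show ?thesis by (simp add: \<theta>_def)
qed

theorem theorem2p3:
  fixes a b c p q r :: real
  defines "N \<equiv> DIM('a::euclidean_space)"
  assumes "1 \<le> p" and "0 < q" and "0 < r"
  shows "((a + real N) / q \<noteq> (b - p + real N) / p \<and> W_embeds TYPE('a) a b q p c r
            \<longrightarrow> theta N a b q p r c \<in> {0..1}
              \<and> theta N a b q p r c * (1/p - 1/real N - 1/q) \<le> 1/r - 1/q
              \<and> ereal r \<le> max (sob_exp p N) (ereal q))
       \<and> ((a + real N) / q = (b - p + real N) / p \<and> c = c0 N a q r \<and> W_embeds TYPE('a) a b q p c r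
            \<longrightarrow> ereal r \<le> max (sob_exp p N) (ereal q))"
proof -
  have "0 < p" using \<open>1 \<le> p\<close> by simp
  have exponent_bound: "ereal r \<le> max (sob_exp p N) (ereal q)" if "W_embeds TYPE('a) a b q p c r"
    using le_max_sob_exp_if_inverse_ge[OF \<open>0 < p\<close> \<open>0 < q\<close> \<open>0 < r\<close>]
      embedding_imp_exponent_bound[OF \<open>0 < p\<close> \<open>0 < q\<close> \<open>0 < r\<close> that]
    by (simp add: N_def)
  show ?thesis
    using embedding_imp_theta_bounds[OF \<open>0 < p\<close> \<open>0 < q\<close> \<open>0 < r\<close>] exponent_bound
    by (auto simp: N_def)
qed

end
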